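(* Assume that each bus has either no generator or at least two generators, and that $x^*_n>0$ for all $n$; let $b^*$ be the unique efficient Nash equilibrium, $b^*_n=2a_nx^*_n+c_n$. Consider any execution of the Bid Adjustment Algorithm with $0<\beta_k<2a_n$ for all $n$ and $k\ge1$, and let $a_{\max}=\max_n a_n$. Then for all $k\ge1$, $$\langle b(k+1)-b(k),\,b^*-b(k)\rangle\ \ge\ \frac{\beta_k}{2a_{\max}}\,\|b(k)-b^*\|^2.$$
   Context: Network: directed graph with buses $\{1,\dots,N_b\}$, edge set $\mathcal E$, line flow limits $\bar z_{ij}>0$, $G_i$ the set of generators at bus $i$ (the $G_i$ partition $\{1,\dots,N\}$), loads $y_i\ge0$. Generator $n$ has cost $f_n(x)=a_nx^2+c_nx$, $a_n>0$, $c_n\ge0$. DC-OPF: minimize $\sum_n f_n(x_n)$ over $(x,z)$ s.t. $\sum_{j:(i,j)\in\mathcal E}z_{ij}-\sum_{j:(j,i)\in\mathcal E}z_{ji}=\sum_{n\in G_i}x_n-y_i$ for all $i$, $|z_{ij}|\le\bar z_{ij}$, $x\ge0$; assumed feasible with optimizer $(x^*,z^* )$, $x^*$ unique. S-DC-OPF given bids $b\ge0$: same constraints, objective $\sum_n b_nx_n$. An efficient Nash equilibrium $b^*$ is in particular a bid for which $(x^*,z^* )$ is an optimizer of S-DC-OPF with bids $b^*$ (under the stated assumptions it is unique and equals $2a_nx^*_n+c_n$). $\|\cdot\|$ is the Euclidean norm. Bid Adjustment Algorithm: given stepsizes $\beta_k>0$, each generator picks $b_n(1)\ge c_n$. For each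 $k\ge1$: $q_n(k)=\arg\max_{q\ge0}(b_n(k)q-f_n(q))$; the operator selects an optimizer $(x^{\rm opt}(k),z^{\rm opt}(k))$ of S-DC-OPF with bids $b(k)$; and $b_n(k+1)=[\,b_n(k)+\beta_k(x^{\rm opt}_n(k)-q_n(k))\,]^+$, where $[u]^+=\max\{0,u\}$. *)

theory Defs
  imports Complex_Main
begin

text \<open>Buses are elements of a finite type 'b, generators of a finite type 'g.
  gb n is the bus of generator n, so G_i = {n. gb n = i} partitions the generators.\<close>

definition gen_cost :: "('g \<Rightarrow> real) \<Rightarrow> ('g \<Rightarrow> real) \<Rightarrow> 'g \<Rightarrow> real \<Rightarrow> real" where
  "gen_cost a c n x = a n * x\<^sup>2 + c n * x"

definition opf_feasible ::
  "('b::finite \<times> 'b) set \<Rightarrow> ('b \<times> 'b \<Rightarrow> real) \<Rightarrow> ('g::finite \<Rightarrow> 'b) \<Rightarrow> ('b \<Rightarrow> real)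
   \<Rightarrow> ('g \<Rightarrow> real) \<Rightarrow> ('b \<times> 'b \<Rightarrow> real) \<Rightarrow> bool" where
  "opf_feasible E zbar gb y x z \<longleftrightarrow>
     (\<forall>i. (\<Sum>j\<in>{j. (i, j) \<in> E}. z (i, j)) - (\<Sum>j\<in>{j. (j, i) \<in> E}. z (j, i))
            = (\<Sum>n\<in>{n. gb n = i}. x n) - y i)
   \<and> (\<forall>e\<in>E. \<bar>z e\<bar> \<le> zbar e)
   \<and> (\<forall>n. 0 \<le> x n)"

definition dcopf_opt where
  "dcopf_opt E zbar gb y a c x z \<longleftrightarrow> opf_feasible E zbar gb y x z \<and>
     (\<forall>x' z'. opf_feasible E zbar gb y x' z' \<longrightarrow>
        (\<Sum>n\<in>UNIV. gen_cost a c n (x n)) \<le> (\<Sum>n\<in>UNIV. gen_cost a c n (x' n)))"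

definition sdcopf_opt where
  "sdcopf_opt E zbar gb y b x z \<longleftrightarrow> opf_feasible E zbar gb y x z \<and>
     (\<forall>x' z'. opf_feasible E zbar gb y x' z' \<longrightarrow>
        (\<Sum>n\<in>UNIV. b n * x n) \<le> (\<Sum>n\<in>UNIV. b n * x' n))"

end

theory Submission
  imports Defs
begin

(* Along the algorithm every bid stays above c_n, so the profit maximizer is
   q_n = (b_n - c_n) / (2 a_n); since beta < 2 a_n the projection [.]^+ is never active and
   the step is beta (x^opt - q). Optimality of x^opt for the bids b and of x* for b* in the
   same linear program gives <x^opt - x*, b* - b> >= 0, while x* - q = (b* - b) / (2 a)
   componentwise; bounding 1 / (2 a_n) below by 1 / (2 a_max) finishes the estimate. *)

lemma quadratic_profit_maximizer:
  fixes a b c q :: real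
  assumes "a > 0" "b \<ge> c" "q \<ge> 0"
    and max: "\<forall>q'\<ge>0. b * q' - (a * q'\<^sup>2 + c * q') \<le> b * q - (a * q\<^sup>2 + c * q)"
  shows "q = (b - c) / (2 * a)"
proof -
  define q0 where "q0 = (b - c) / (2 * a)"
  have "q0 \<ge> 0" "b = c + 2 * a * q0"
    using assms(1,2) by (auto simp: q0_def)
  then have "a * (q - q0)\<^sup>2 = (b * q0 - (a * q0\<^sup>2 + c * q0)) - (b * q - (a * q\<^sup>2 + c * q))"
    by (simp add: power2_eq_square algebra_simps)
  also have "\<dots> \<le> 0"
    using max \<open>q0 \<ge> 0\<close> by auto
  finally have "(q - q0)\<^sup>2 \<le> 0"
    using \<open>a > 0\<close> by (simp add: mult_le_0_iff)
  then show ?thesis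
    by (simp add: q0_def)
qed

lemma step_times_profit_maximizer_le:
  fixes a b c beta :: real
  assumes "a > 0" "b \<ge> c" "beta < 2 * a"
  shows "beta * ((b - c) / (2 * a)) \<le> b - c"
proof -
  have "beta * (b - c) \<le> 2 * a * (b - c)"
    using assms by (intro mult_right_mono) auto
  then show ?thesis
    using \<open>a > 0\<close> by (simp add: field_simps)
qed

lemma projected_bid_step_ge_cost:
  fixes a b c beta x :: real
  assumes "a > 0" "b \<ge> c" "0 < beta" "beta < 2 * a" "x \<ge> 0"
  shows "b + beta * (x - (b - c) / (2 * a)) \<ge> c"
proof -
  have "beta * x \<ge> 0"
    using assms(3,5) by simp
  then show ?thesis
    using step_times_profit_maximizer_le[OF assms(1,2,4)] by (simp add: right_diff_distrib)
qed

lemma sdcopf_opt_bid_monotone: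
  fixes b b' x x' :: "'g::finite \<Rightarrow> real"
  assumes "sdcopf_opt E zbar gb y b x z" "sdcopf_opt E zbar gb y b' x' z'"
  shows "(\<Sum>n\<in>UNIV. (b n - b' n) * (x n - x' n)) \<le> 0"
proof -
  have "(\<Sum>n\<in>UNIV. b n * x n) \<le> (\<Sum>n\<in>UNIV. b n * x' n)"
    "(\<Sum>n\<in>UNIV. b' n * x' n) \<le> (\<Sum>n\<in>UNIV. b' n * x n)"
    using assms unfolding sdcopf_opt_def by blast+
  moreover have "(\<Sum>n\<in>UNIV. (b n - b' n) * (x n - x' n))
      = (\<Sum>n\<in>UNIV. b n * x n) - (\<Sum>n\<in>UNIV. b n * x' n)
        + ((\<Sum>n\<in>UNIV. b' n * x' n) - (\<Sum>n\<in>UNIV. b' n * x n))"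
    by (simp add: sum_subtractf[symmetric] sum.distrib[symmetric] algebra_simps)
  ultimately show ?thesis
    by linarith
qed

lemma sum_sq_div_ge_sum_sq_div_Max:
  fixes a w :: "'g::finite \<Rightarrow> real"
  assumes "\<forall>n. a n > 0"
  shows "(\<Sum>n\<in>UNIV. (w n)\<^sup>2) / (2 * Max (range a)) \<le> (\<Sum>n\<in>UNIV. (w n)\<^sup>2 / (2 * a n))"
  unfolding sum_divide_distrib
proof (rule sum_mono)
  fix n
  have "a n \<le> Max (range a)" "a n > 0"
    using assms by simp_all
  moreover from this have "Max (range a) > 0"
    by linarith
  ultimately show "(w n)\<^sup>2 / (2 * Max (range a)) \<le> (w n)\<^sup>2 / (2 * a n)"
    by (intro divide_left_mono) auto
qed

lemma inner_product_lower_bound: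
  fixes a b bstar x x' q :: "'g::finite \<Rightarrow> real" and beta :: real
  assumes a_pos: "\<forall>n. a n > 0" and "beta > 0"
    and monotone: "(\<Sum>n\<in>UNIV. (bstar n - b n) * (x n - x' n)) \<le> 0"
    and x_minus_q: "\<forall>n. x n - q n = (bstar n - b n) / (2 * a n)"
  shows "beta / (2 * Max (range a)) * (\<Sum>n\<in>UNIV. (b n - bstar n)\<^sup>2)
    \<le> (\<Sum>n\<in>UNIV. beta * (x' n - q n) * (bstar n - b n))"
proof -
  define w where "w n = bstar n - b n" for n
  have pointwise: "beta * (x' n - q n) * w n = beta * (w n * (x' n - x n) + (w n)\<^sup>2 / (2 * a n))" for n
    using x_minus_q unfolding w_def by (simp add: power2_eq_square algebra_simps)
  then have split: "(\<Sum>n\<in>UNIV. beta * (x' n - q n) * w n)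
      = beta * ((\<Sum>n\<in>UNIV. w n * (x' n - x n)) + (\<Sum>n\<in>UNIV. (w n)\<^sup>2 / (2 * a n)))"
    unfolding sum.distrib[symmetric] sum_distrib_left using pointwise by (intro sum.cong) auto
  have "(\<Sum>n\<in>UNIV. w n * (x' n - x n)) \<ge> 0"
    using monotone unfolding w_def by (simp add: right_diff_distrib sum_subtractf)
  moreover have "(\<Sum>n\<in>UNIV. (b n - bstar n)\<^sup>2) / (2 * Max (range a))
      \<le> (\<Sum>n\<in>UNIV. (w n)\<^sup>2 / (2 * a n))"
    using sum_sq_div_ge_sum_sq_div_Max[OF a_pos, of w] unfolding w_def by (simp add: power2_commute)
  ultimately have "beta * ((\<Sum>n\<in>UNIV. (b n - bstar n)\<^sup>2) / (2 * Max (range a)))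
      \<le> beta * ((\<Sum>n\<in>UNIV. w n * (x' n - x n)) + (\<Sum>n\<in>UNIV. (w n)\<^sup>2 / (2 * a n)))"
    using \<open>beta > 0\<close> by (intro mult_left_mono) auto
  then show ?thesis
    using split unfolding w_def by simp
qed

lemma bid_adjustment_bids_ge_cost:
  fixes a c :: "'g \<Rightarrow> real" and beta :: "nat \<Rightarrow> real" and b q x :: "nat \<Rightarrow> 'g \<Rightarrow> real"
  assumes a_pos: "\<forall>n. a n > 0" and c_nonneg: "\<forall>n. c n \<ge> 0"
    and b_init: "\<forall>n. b 1 n \<ge> c n"
    and q_profit: "\<forall>k\<ge>1. \<forall>n. b k n \<ge> c n \<longrightarrow> q k n = (b k n - c n) / (2 * a n)"
    and x_nonneg: "\<forall>k\<ge>1. \<forall>n. x k n \<ge> 0"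
    and b_update: "\<forall>k\<ge>1. \<forall>n. b (k + 1) n = max 0 (b k n + beta k * (x k n - q k n))"
    and beta_bounds: "\<forall>k\<ge>1. \<forall>n. 0 < beta k \<and> beta k < 2 * a n"
    and "k \<ge> 1"
  shows "b k n \<ge> c n"
  using \<open>k \<ge> 1\<close>
proof (induction k arbitrary: n rule: dec_induct)
  case (step k)
  then have "b k n + beta k * (x k n - q k n) \<ge> c n"
    using projected_bid_step_ge_cost[of "a n" "c n" "b k n" "beta k" "x k n"]
      q_profit a_pos beta_bounds x_nonneg by auto
  then show ?case
    using step b_update c_nonneg by (metis Suc_eq_plus1 max.coboundedI2)
qed (use b_init in simp)

theorem lemma4p3:
  fixes E :: "('b::finite \<times> 'b) set"
    and zbar :: "'b \<times> 'b \<Rightarrow> real"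
    and gb :: "'g::finite \<Rightarrow> 'b"
    and y :: "'b \<Rightarrow> real"
    and a c :: "'g \<Rightarrow> real"
    and xs :: "'g \<Rightarrow> real" and zs :: "'b \<times> 'b \<Rightarrow> real"
    and bstar :: "'g \<Rightarrow> real"
    and beta :: "nat \<Rightarrow> real"
    and b q xopt :: "nat \<Rightarrow> 'g \<Rightarrow> real"
    and zopt :: "nat \<Rightarrow> 'b \<times> 'b \<Rightarrow> real"
    and k :: nat
  assumes zbar_pos: "\<forall>e\<in>E. zbar e > 0"
    and y_nonneg: "\<forall>i. y i \<ge> 0"
    and a_pos: "\<forall>n. a n > 0"
    and c_nonneg: "\<forall>n. c n \<ge> 0"
    and opt: "dcopf_opt E zbar gb y a c xs zs"
    and xs_unique: "\<forall>x z. dcopf_opt E zbar gb y a c x z \<longrightarrow> x = xs"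
    and gens: "\<forall>i. card {n. gb n = i} \<noteq> 1"
    and xs_pos: "\<forall>n. xs n > 0"
    and bstar_def: "\<forall>n. bstar n = 2 * a n * xs n + c n"
    and bstar_NE: "sdcopf_opt E zbar gb y bstar xs zs"
    and b_init: "\<forall>n. b 1 n \<ge> c n"
    and q_def: "\<forall>k\<ge>1. \<forall>n. q k n \<ge> 0 \<and>
                  (\<forall>q'\<ge>0. b k n * q' - gen_cost a c n q' \<le> b k n * q k n - gen_cost a c n (q k n))"
    and xopt_def: "\<forall>k\<ge>1. sdcopf_opt E zbar gb y (b k) (xopt k) (zopt k)"
    and b_update: "\<forall>k\<ge>1. \<forall>n. b (k + 1) n = max 0 (b k n + beta k * (xopt k n - q k n))"
    and beta_bounds: "\<forall>k\<ge>1. \<forall>n. 0 < beta k \<and> beta k < 2 * a n"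
    and k_ge: "k \<ge> 1"
  shows "(\<Sum>n\<in>UNIV. (b (k + 1) n - b k n) * (bstar n - b k n))
           \<ge> beta k / (2 * Max (range a)) * (\<Sum>n\<in>UNIV. (b k n - bstar n)\<^sup>2)"
proof -
  have xopt_nonneg: "\<forall>m\<ge>1. \<forall>n. xopt m n \<ge> 0"
    using xopt_def unfolding sdcopf_opt_def opf_feasible_def by blast
  have q_eq: "\<forall>m\<ge>1. \<forall>n. b m n \<ge> c n \<longrightarrow> q m n = (b m n - c n) / (2 * a n)"
    using quadratic_profit_maximizer q_def a_pos unfolding gen_cost_def by blast
  have bk_ge: "b k n \<ge> c n" for n
    using bid_adjustment_bids_ge_cost[OF a_pos c_nonneg b_init q_eq xopt_nonneg b_update
      beta_bounds k_ge] .
  have "b k n + beta k * (xopt k n - q k n) \<ge> c n" for n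
    using projected_bid_step_ge_cost[of "a n" "c n" "b k n" "beta k" "xopt k n"]
      q_eq a_pos beta_bounds xopt_nonneg k_ge bk_ge by auto
  then have step: "b (k + 1) n - b k n = beta k * (xopt k n - q k n)" for n
    using b_update c_nonneg k_ge by (metis add_diff_cancel_left' max.absorb2 order_trans)
  have "xs n - q k n = (bstar n - b k n) / (2 * a n)" for n
  proof -
    have "xs n = (bstar n - c n) / (2 * a n)"
      using bstar_def a_pos[rule_format, of n] by (simp add: field_simps)
    then show ?thesis
      using q_eq k_ge bk_ge by (simp add: diff_divide_distrib)
  qed
  then show ?thesis
    unfolding step
    using inner_product_lower_bound[OF a_pos _ sdcopf_opt_bid_monotone[OF bstar_NE xopt_def[rule_format, OF k_ge]]]
      beta_bounds k_ge by blast
qed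

end
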